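(* Consider the model and the two-stage decision procedure described in the context, and let $W(\gamma_t,p_t)=\sup\{P_{\mathrm e}(\gamma_t,p_t,\mathbf t,P_{\mathrm{FA,M}},P_{\mathrm{MD,M}}):\ \mathbf t\in\{0,1\}^N,\ \sum_i(1-t_i)\le\bar mN,\ P_{\mathrm{FA,M}},P_{\mathrm{MD,M}}\in[0,1]\}$. Let $\Gamma_t=\{p_\alpha(a\mid1)/p_\alpha(a\mid0): a\in\mathcal A\}$. Then the minimal value of $W(\gamma_t,p_t)$ over $\gamma_t>0$, $p_t\in[0,1]$ can be achieved with $\gamma_t\in\Gamma_t$; that is, $\inf_{\gamma_t>0,\,p_t\in[0,1]}W(\gamma_t,p_t)=\inf_{\gamma_t\in\Gamma_t,\,p_t\in[0,1]}W(\gamma_t,p_t)$.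
   Context: There are $N$ robots indexed by $i\in\{1,\dots,N\}$ and $\bar m\in[0,1]$ is a known upper bound on the proportion of malicious robots. A binary event $\Xi\in\{0,1\}$ has prior probabilities $\Pr(\Xi=0),\Pr(\Xi=1)>0$; $\mathcal H_0$ means $\Xi=0$, $\mathcal H_1$ means $\Xi=1$. An unknown deterministic trust vector $\mathbf t\in\{0,1\}^N$ indicates legitimate ($t_i=1$) or malicious ($t_i=0$) robots. Given $\Xi$ and $\mathbf t$, the measurements $Y_i\in\{0,1\}$ are independent with $\Pr(Y_i=1\mid\Xi=0)=P_{\mathrm{FA,L}}$, $\Pr(Y_i=0\mid\Xi=1)=P_{\mathrm{MD,L}}$ if $t_i=1$ and $\Pr(Y_i=1\mid\Xi=0)=P_{\mathrm{FA,M}}$, $\Pr(Y_i=0\mid\Xi=1)=P_{\mathrm{MD,M}}$ if $t_i=0$, where $P_{\mathrm{FA,L}},P_{\mathrm{MD,L}}\in(0,0.5)$ and $P_{\mathrm{FA,M}},P_{\mathrm{MD,M}}\in[0,1]$. Trust values $\alpha_i$ take values in a finite set $\mathcal A$; given $\mathbf t$ they are independent with pmf $p_\alpha(\cdot\mid t_i)$, independent of $\Xi$ and the measurements; $p_\alpha(a\mid0)p_\alpha(a\mid1)\notin\{0,1\}$ for all $a\in\mathcal A$. Two-stage procedure with parameters $\gamma_t>0$, $p_t\in[0,1]$: $\hat t_i=1$ if $p_\alpha(\alpha_i\mid1)/p_\alpha(\alpha_i\mid0)>\gamma_t$, $\hat t_i=0$ if it is $<\gamma_t$, and on equality $\hat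 t_i=1$ with probability $p_t$ (independently), else $0$. With $\gamma_{\mathrm{TS}}=\log(\Pr(\Xi=0)/\Pr(\Xi=1))$, $w_1=\log\frac{1-P_{\mathrm{MD,L}}}{P_{\mathrm{FA,L}}}$, $w_0=\log\frac{1-P_{\mathrm{FA,L}}}{P_{\mathrm{MD,L}}}$, $S_N=\sum_i\hat t_i[w_1Y_i-w_0(1-Y_i)]$, define $P_{\mathrm{FA}}=\Pr(S_N\ge\gamma_{\mathrm{TS}}\mid\mathcal H_0)$, $P_{\mathrm{MD}}=\Pr(S_N<\gamma_{\mathrm{TS}}\mid\mathcal H_1)$ and $P_{\mathrm e}(\gamma_t,p_t,\mathbf t,P_{\mathrm{FA,M}},P_{\mathrm{MD,M}})=\Pr(\Xi=0)P_{\mathrm{FA}}+\Pr(\Xi=1)P_{\mathrm{MD}}$. *)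

theory Defs
  imports "HOL-Library.FuncSet" Complex_Main
begin

text \<open>Binary vectors of length N are functions in PiE {..<N} (\<lambda>_. UNIV);
  robot i corresponds to index i-1. Boolean True encodes 1, False encodes 0.\<close>

definition binvecs :: "nat \<Rightarrow> (nat \<Rightarrow> bool) set" where
  "binvecs N = Pi\<^sub>E {..<N} (\<lambda>_. UNIV)"

definition bern :: "real \<Rightarrow> bool \<Rightarrow> real" where
  "bern p b = (if b then p else 1 - p)"

text \<open>Likelihood ratio of a trust value a: p_alpha(a|1)/p_alpha(a|0).
  pa a s is p_alpha(a | t_i = s).\<close>
definition lratio :: "('a \<Rightarrow> bool \<Rightarrow> real) \<Rightarrow> 'a \<Rightarrow> real" where
  "lratio pa a = pa a True / pa a False"

text \<open>Probability that hat t_i = 1 given t_i = s, for parameters gamma_t, p_t.\<close>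
definition qhat :: "'a set \<Rightarrow> ('a \<Rightarrow> bool \<Rightarrow> real) \<Rightarrow> real \<Rightarrow> real \<Rightarrow> bool \<Rightarrow> real" where
  "qhat A pa gt pt s =
     (\<Sum>a\<in>A. pa a s * (if lratio pa a > gt then 1 else if lratio pa a = gt then pt else 0))"

text \<open>Probability that Y_i = 1 given Xi = xi and t_i = s.\<close>
definition pY1 :: "real \<Rightarrow> real \<Rightarrow> real \<Rightarrow> real \<Rightarrow> bool \<Rightarrow> bool \<Rightarrow> real" where
  "pY1 PFAL PMDL PFAM PMDM xi s =
     (if xi then (if s then 1 - PMDL else 1 - PMDM) else (if s then PFAL else PFAM))"

definition w1 :: "real \<Rightarrow> real \<Rightarrow> real" where
  "w1 PFAL PMDL = ln ((1 - PMDL) / PFAL)"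
definition w0 :: "real \<Rightarrow> real \<Rightarrow> real" where
  "w0 PFAL PMDL = ln ((1 - PFAL) / PMDL)"

text \<open>Test statistic S_N for realisations th (of hat t) and y (of Y).\<close>
definition SN :: "nat \<Rightarrow> real \<Rightarrow> real \<Rightarrow> (nat \<Rightarrow> bool) \<Rightarrow> (nat \<Rightarrow> bool) \<Rightarrow> real" where
  "SN N PFAL PMDL th y =
     (\<Sum>i<N. (if th i then 1 else 0) * (if y i then w1 PFAL PMDL else - w0 PFAL PMDL))"

text \<open>Joint probability of (hat t, Y) = (th, y) given Xi = xi and trust vector t.\<close>
definition jointp :: "nat \<Rightarrow> 'a set \<Rightarrow> ('a \<Rightarrow> bool \<Rightarrow> real) \<Rightarrow> real \<Rightarrow> real \<Rightarrow> real \<Rightarrow> real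
   \<Rightarrow> real \<Rightarrow> real \<Rightarrow> (nat \<Rightarrow> bool) \<Rightarrow> bool \<Rightarrow> (nat \<Rightarrow> bool) \<Rightarrow> (nat \<Rightarrow> bool) \<Rightarrow> real" where
  "jointp N A pa PFAL PMDL PFAM PMDM gt pt t xi th y =
     (\<Prod>i<N. bern (qhat A pa gt pt (t i)) (th i) * bern (pY1 PFAL PMDL PFAM PMDM xi (t i)) (y i))"

text \<open>Error probability P_e(gamma_t, p_t, t, P_FA,M, P_MD,M); pi0 = Pr(Xi = 0).\<close>
definition Pe :: "nat \<Rightarrow> 'a set \<Rightarrow> ('a \<Rightarrow> bool \<Rightarrow> real) \<Rightarrow> real \<Rightarrow> real \<Rightarrow> real
   \<Rightarrow> real \<Rightarrow> real \<Rightarrow> (nat \<Rightarrow> bool) \<Rightarrow> real \<Rightarrow> real \<Rightarrow> real" where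
  "Pe N A pa pi0 PFAL PMDL gt pt t PFAM PMDM =
     (let gTS = ln (pi0 / (1 - pi0));
          PFA = (\<Sum>th\<in>binvecs N. \<Sum>y\<in>binvecs N.
                   (if SN N PFAL PMDL th y \<ge> gTS
                    then jointp N A pa PFAL PMDL PFAM PMDM gt pt t False th y else 0));
          PMD = (\<Sum>th\<in>binvecs N. \<Sum>y\<in>binvecs N.
                   (if SN N PFAL PMDL th y < gTS
                    then jointp N A pa PFAL PMDL PFAM PMDM gt pt t True th y else 0))
      in pi0 * PFA + (1 - pi0) * PMD)"

definition Wc :: "nat \<Rightarrow> real \<Rightarrow> 'a set \<Rightarrow> ('a \<Rightarrow> bool \<Rightarrow> real) \<Rightarrow> real \<Rightarrow> real \<Rightarrow> real
   \<Rightarrow> real \<Rightarrow> real \<Rightarrow> real" where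
  "Wc N mbar A pa pi0 PFAL PMDL gt pt =
     Sup {Pe N A pa pi0 PFAL PMDL gt pt t PFAM PMDM | t PFAM PMDM.
            t \<in> binvecs N \<and> real (card {i. i < N \<and> \<not> t i}) \<le> mbar * real N \<and>
            PFAM \<in> {0..1} \<and> PMDM \<in> {0..1}}"

end

theory Submission
  imports Defs
begin

text \<open>The error probability depends on \<open>(\<gamma>\<^sub>t, p\<^sub>t)\<close> only through the law of the
  trust estimates given \<open>t\<^sub>i\<close>, i.e. through the values of the randomised threshold rule on the
  finite set \<open>\<Gamma>\<^sub>t\<close> of likelihood ratios. On a finite set every threshold rule agrees with
  one whose threshold lies in the set: if \<open>\<gamma>\<^sub>t \<notin> \<Gamma>\<^sub>t\<close>, take the smallest ratio above
  \<open>\<gamma>\<^sub>t\<close> with \<open>p\<^sub>t = 1\<close> or, if there is none, the largest ratio with \<open>p\<^sub>t = 0\<close>.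
  Since \<open>\<Gamma>\<^sub>t \<subseteq> (0, \<infinity>)\<close>, both infima are then taken over the same set of values
  of \<open>W\<close>; no other hypothesis on the model is needed.\<close>

definition threshold_rule :: "real \<Rightarrow> real \<Rightarrow> real \<Rightarrow> real" where
  "threshold_rule g p r = (if r > g then 1 else if r = g then p else 0)"

lemma threshold_rule_on_finite_set:
  fixes G :: "real set"
  assumes "finite G" "G \<noteq> {}" "p \<in> {0..1}"
  obtains g' p' where "g' \<in> G" "p' \<in> {0..1}"
    "\<And>r. r \<in> G \<Longrightarrow> threshold_rule g p r = threshold_rule g' p' r"
proof (cases "g \<in> G")
  case True
  then show ?thesis using assms(3) that by blast
next
  case g_notin: False
  let ?U = "{r \<in> G. g < r}"
  show ?thesis
  proof (cases "?U = {}")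
    case True
    have "Max G \<in> G" using assms(1,2) by simp
    moreover have "threshold_rule g p r = threshold_rule (Max G) 0 r" if "r \<in> G" for r
    proof -
      have "r \<le> g" "r \<noteq> g" using True g_notin that by auto
      moreover have "r \<le> Max G" using assms(1) that by simp
      ultimately show ?thesis unfolding threshold_rule_def by auto
    qed
    ultimately show ?thesis by (intro that[of "Max G" 0]) auto
  next
    case False
    have "finite ?U" using assms(1) by simp
    define m where "m = Min ?U"
    have m: "m \<in> G" "g < m" "\<And>r. r \<in> ?U \<Longrightarrow> m \<le> r"
      using Min_in[OF \<open>finite ?U\<close> False] \<open>finite ?U\<close> unfolding m_def by auto
    have "threshold_rule g p r = threshold_rule m 1 r" if "r \<in> G" for r
    proof (cases "g < r")
      case True
      then show ?thesis using m(3) that unfolding threshold_rule_def by fastforce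
    next
      case False
      moreover have "r \<noteq> g" using g_notin that by auto
      ultimately have "r < g" "r < m" using m(2) by auto
      then show ?thesis using False unfolding threshold_rule_def by auto
    qed
    then show ?thesis using m(1) by (intro that[of m 1]) auto
  qed
qed

lemma qhat_threshold_rule_cong:
  assumes "\<And>r. r \<in> lratio pa ` A \<Longrightarrow> threshold_rule g p r = threshold_rule g' p' r"
  shows "qhat A pa g p = qhat A pa g' p'"
proof
  fix s
  show "qhat A pa g p s = qhat A pa g' p' s"
    using assms unfolding qhat_def threshold_rule_def[symmetric] by (intro sum.cong) auto
qed

lemma Wc_qhat_cong:
  assumes "qhat A pa g p = qhat A pa g' p'"
  shows "Wc N mbar A pa pi0 PFAL PMDL g p = Wc N mbar A pa pi0 PFAL PMDL g' p'"
  unfolding Wc_def Pe_def jointp_def assms ..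

lemma lratio_pos:
  assumes "pa a False \<ge> 0" "pa a True \<ge> 0" "pa a False * pa a True \<noteq> 0"
  shows "lratio pa a > 0"
  using assms unfolding lratio_def by (simp add: less_le)

theorem lemma3:
  fixes N :: nat and mbar pi0 PFAL PMDL :: real
    and A :: "'a set" and pa :: "'a \<Rightarrow> bool \<Rightarrow> real"
  assumes "mbar \<in> {0..1}"
    and "0 < pi0" and "pi0 < 1"
    and "0 < PFAL" and "PFAL < 1/2" and "0 < PMDL" and "PMDL < 1/2"
    and "finite A" and "A \<noteq> {}"
    and "\<And>a s. a \<in> A \<Longrightarrow> pa a s \<ge> 0"
    and "\<And>s. (\<Sum>a\<in>A. pa a s) = 1"
    and "\<And>a. a \<in> A \<Longrightarrow> pa a False * pa a True \<notin> {0, 1}"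
  shows "(INF gp \<in> {0<..} \<times> {0..1}. Wc N mbar A pa pi0 PFAL PMDL (fst gp) (snd gp))
       = (INF gp \<in> (lratio pa ` A) \<times> {0..1}. Wc N mbar A pa pi0 PFAL PMDL (fst gp) (snd gp))"
proof -
  let ?W = "\<lambda>gp. Wc N mbar A pa pi0 PFAL PMDL (fst gp) (snd gp)"
  have \<Gamma>: "finite (lratio pa ` A)" "lratio pa ` A \<noteq> {}" using assms(8,9) by auto
  have "lratio pa a > 0" if "a \<in> A" for a
    using assms(10,12)[OF that] by (intro lratio_pos) auto
  then have "lratio pa ` A \<times> {0..1} \<subseteq> {0<..} \<times> {0..1::real}" by auto
  moreover have "?W ` ({0<..} \<times> {0..1}) \<subseteq> ?W ` (lratio pa ` A \<times> {0..1})"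
  proof clarify
    fix g p :: real
    assume "p \<in> {0..1}"
    then obtain g' p' where "g' \<in> lratio pa ` A" "p' \<in> {0..1}"
      and same_rule: "\<And>r. r \<in> lratio pa ` A \<Longrightarrow> threshold_rule g p r = threshold_rule g' p' r"
      by (rule threshold_rule_on_finite_set[OF \<Gamma>, where g = g]) (rule that)
    from same_rule have "qhat A pa g p = qhat A pa g' p'" by (rule qhat_threshold_rule_cong)
    then have "?W (g, p) = ?W (g', p')" unfolding fst_conv snd_conv by (rule Wc_qhat_cong)
    with \<open>g' \<in> lratio pa ` A\<close> \<open>p' \<in> {0..1}\<close>
    show "?W (g, p) \<in> ?W ` (lratio pa ` A \<times> {0..1})" by blast
  qed
  ultimately have "?W ` ({0<..} \<times> {0..1}) = ?W ` (lratio pa ` A \<times> {0..1})" by blast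
  then show ?thesis by simp
qed

end
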